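(* For every $M\geq 1$, $$g(M)=\sum_{0\leq 2n\leq M-1}(M-2n)\binom{M-n-1}{n}.$$
   Context: The perimeter of a nonempty partition $\lambda$ with largest part $\lambda_1$ and $\ell(\lambda)$ parts is $\lambda_1+\ell(\lambda)-1$. $g(M)$ is the total number of parts, summed over all partitions into odd parts with perimeter $M$. *)

theory Defs
  imports Main
begin

text \<open>A partition is represented as a list of positive parts in non-increasing order.
  Its largest part is the head, its number of parts is the length.\<close>

definition is_partition :: "nat list \<Rightarrow> bool" where
  "is_partition xs \<longleftrightarrow> sorted_wrt (\<ge>) xs \<and> (\<forall>x\<in>set xs. 0 < x)"

definition perimeter :: "nat list \<Rightarrow> nat" where
  "perimeter xs = hd xs + length xs - 1"

definition odd_parts_perimeter :: "nat \<Rightarrow> nat list set" where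
  "odd_parts_perimeter M = {xs. xs \<noteq> [] \<and> is_partition xs \<and> (\<forall>x\<in>set xs. odd x) \<and> perimeter xs = M}"

definition g :: "nat \<Rightarrow> nat" where
  "g M = (\<Sum>xs\<in>odd_parts_perimeter M. length xs)"

end

theory Submission
  imports Defs
begin

text \<open>A partition into odd parts with perimeter \<open>M\<close> consists of its largest part \<open>2k + 1\<close>
  followed by \<open>M - 2k - 1\<close> odd parts of size at most \<open>2k + 1\<close>, so it has \<open>M - 2k\<close> parts.
  The tails are multisets of size \<open>M - 2k - 1\<close> over the \<open>k + 1\<close> odd numbers \<open>\<le> 2k + 1\<close>,
  of which there are \<open>(M - k - 1) choose k\<close>; this count satisfies Pascal's recursion,
  obtained by asking whether the first part equals the bound \<open>2k + 1\<close>.\<close>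

definition odd_parts_upto :: "nat \<Rightarrow> nat \<Rightarrow> nat list set" where
  "odd_parts_upto k n =
     {ys. length ys = n \<and> sorted_wrt (\<ge>) ys \<and> (\<forall>x\<in>set ys. odd x \<and> x \<le> 2 * k + 1)}"

lemma finite_odd_parts_upto: "finite (odd_parts_upto k n)"
proof (rule finite_subset)
  show "odd_parts_upto k n \<subseteq> {ys. set ys \<subseteq> {..2 * k + 1} \<and> length ys = n}"
    unfolding odd_parts_upto_def by auto
  show "finite {ys. set ys \<subseteq> {..2 * k + 1} \<and> length ys = n}"
    by (rule finite_lists_length_eq) simp
qed

lemma odd_parts_upto_0: "odd_parts_upto k 0 = {[]}"
  unfolding odd_parts_upto_def by auto

lemma odd_parts_upto_0_Suc: "odd_parts_upto 0 (Suc n) = Cons 1 ` odd_parts_upto 0 n"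
proof (intro equalityI subsetI)
  fix ys assume ys: "ys \<in> odd_parts_upto 0 (Suc n)"
  then obtain x zs where xzs: "ys = x # zs"
    unfolding odd_parts_upto_def by (cases ys) auto
  with ys have "odd x" "x \<le> 1" and zs: "zs \<in> odd_parts_upto 0 n"
    unfolding odd_parts_upto_def by auto
  then have "x = 1"
    using odd_pos[of x] by linarith
  with xzs zs show "ys \<in> Cons 1 ` odd_parts_upto 0 n" by blast
next
  fix ys assume "ys \<in> Cons 1 ` odd_parts_upto 0 n"
  then obtain zs where "ys = 1 # zs" "zs \<in> odd_parts_upto 0 n" by blast
  then show "ys \<in> odd_parts_upto 0 (Suc n)"
    unfolding odd_parts_upto_def by simp
qed

lemma odd_parts_upto_Suc_Suc:
  "odd_parts_upto (Suc k) (Suc n) =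
     Cons (2 * Suc k + 1) ` odd_parts_upto (Suc k) n \<union> odd_parts_upto k (Suc n)"
proof (intro equalityI subsetI)
  fix ys assume ys: "ys \<in> odd_parts_upto (Suc k) (Suc n)"
  then obtain x zs where xzs: "ys = x # zs"
    unfolding odd_parts_upto_def by (cases ys) auto
  with ys have x: "odd x" "x \<le> 2 * Suc k + 1" and zs: "\<forall>z\<in>set zs. z \<le> x"
    unfolding odd_parts_upto_def by auto
  show "ys \<in> Cons (2 * Suc k + 1) ` odd_parts_upto (Suc k) n \<union> odd_parts_upto k (Suc n)"
  proof (cases "x \<le> 2 * k + 1")
    case True
    with ys xzs zs have "ys \<in> odd_parts_upto k (Suc n)"
      unfolding odd_parts_upto_def by fastforce
    then show ?thesis ..
  next
    case False
    with x have "x = 2 * Suc k + 1" by presburger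
    with ys xzs show ?thesis
      unfolding odd_parts_upto_def by auto
  qed
next
  fix ys assume "ys \<in> Cons (2 * Suc k + 1) ` odd_parts_upto (Suc k) n \<union> odd_parts_upto k (Suc n)"
  then show "ys \<in> odd_parts_upto (Suc k) (Suc n)"
  proof
    assume "ys \<in> Cons (2 * Suc k + 1) ` odd_parts_upto (Suc k) n"
    then obtain zs where "ys = (2 * Suc k + 1) # zs" "zs \<in> odd_parts_upto (Suc k) n" by blast
    then show ?thesis
      unfolding odd_parts_upto_def by simp
  next
    assume "ys \<in> odd_parts_upto k (Suc n)"
    then show ?thesis
      unfolding odd_parts_upto_def by fastforce
  qed
qed

lemma card_odd_parts_upto: "card (odd_parts_upto k n) = (n + k) choose k"
proof (induction n arbitrary: k)
  case 0
  then show ?case by (simp add: odd_parts_upto_0)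
next
  case (Suc n)
  note IH_n = Suc.IH
  show ?case
  proof (induction k)
    case 0
    then show ?case
      using IH_n[of 0] by (simp add: odd_parts_upto_0_Suc card_image)
  next
    case (Suc k)
    have "hd ys \<le> 2 * k + 1" if "ys \<in> odd_parts_upto k (Suc n)" for ys
      using that unfolding odd_parts_upto_def by (cases ys) auto
    then have disjoint:
      "Cons (2 * Suc k + 1) ` odd_parts_upto (Suc k) n \<inter> odd_parts_upto k (Suc n) = {}"
      by fastforce
    have "card (odd_parts_upto (Suc k) (Suc n)) =
        card (Cons (2 * Suc k + 1) ` odd_parts_upto (Suc k) n) + card (odd_parts_upto k (Suc n))"
      unfolding odd_parts_upto_Suc_Suc
      by (rule card_Un_disjoint[OF finite_imageI finite_odd_parts_upto disjoint])
        (rule finite_odd_parts_upto)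
    also have "\<dots> = ((n + Suc k) choose Suc k) + ((Suc n + k) choose k)"
      using IH_n[of "Suc k"] Suc.IH by (simp add: card_image)
    also have "\<dots> = (Suc n + Suc k) choose Suc k"
      by (simp add: add.commute)
    finally show ?case .
  qed
qed

lemma odd_parts_perimeter_eq_image:
  assumes "M \<ge> 1"
  shows "odd_parts_perimeter M =
    (\<lambda>(k, ys). (2 * k + 1) # ys) ` (SIGMA k:{k. 2 * k \<le> M - 1}. odd_parts_upto k (M - 2 * k - 1))"
    (is "_ = ?f ` ?S")
proof (intro equalityI subsetI)
  fix xs assume xs: "xs \<in> odd_parts_perimeter M"
  then obtain x ys where xys: "xs = x # ys"
    unfolding odd_parts_perimeter_def by (cases xs) auto
  with xs obtain k where k: "x = 2 * k + 1"
    unfolding odd_parts_perimeter_def by (auto elim: oddE)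
  with xs xys have "2 * k + 1 + length ys = M"
    unfolding odd_parts_perimeter_def perimeter_def by auto
  with xs xys k have "(k, ys) \<in> ?S"
    unfolding odd_parts_perimeter_def odd_parts_upto_def is_partition_def by auto
  with xys k show "xs \<in> ?f ` ?S" by force
next
  fix xs assume "xs \<in> ?f ` ?S"
  then obtain k ys where xs: "xs = (2 * k + 1) # ys" and "2 * k \<le> M - 1"
    and ys: "ys \<in> odd_parts_upto k (M - 2 * k - 1)" by auto
  with assms have "length ys = M - 2 * k - 1" "perimeter xs = M"
    unfolding odd_parts_upto_def perimeter_def by auto
  with xs ys show "xs \<in> odd_parts_perimeter M"
    unfolding odd_parts_perimeter_def odd_parts_upto_def is_partition_def
    using odd_pos by auto
qed

theorem mainTheorem8:
  fixes M :: nat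
  assumes "M \<ge> 1"
  shows "g M = (\<Sum>n | 2 * n \<le> M - 1. (M - 2 * n) * ((M - n - 1) choose n))"
proof -
  let ?K = "{k. 2 * k \<le> M - 1}"
  have "finite ?K" by (rule finite_subset[of _ "{..M}"]) auto
  have "inj_on (\<lambda>(k, ys). (2 * k + 1) # ys) (SIGMA k:?K. odd_parts_upto k (M - 2 * k - 1))"
    by (auto simp: inj_on_def)
  then have "g M = (\<Sum>(k, ys)\<in>(SIGMA k:?K. odd_parts_upto k (M - 2 * k - 1)). Suc (length ys))"
    unfolding g_def odd_parts_perimeter_eq_image[OF assms]
    by (simp add: sum.reindex split_def)
  also have "\<dots> = (\<Sum>k\<in>?K. \<Sum>ys\<in>odd_parts_upto k (M - 2 * k - 1). Suc (length ys))"
    using \<open>finite ?K\<close> by (rule sum.Sigma[symmetric]) (simp add: finite_odd_parts_upto)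
  also have "\<dots> = (\<Sum>k\<in>?K. (M - 2 * k) * ((M - k - 1) choose k))"
  proof (rule sum.cong[OF refl])
    fix k assume k: "k \<in> ?K"
    with assms have "Suc (length ys) = M - 2 * k" if "ys \<in> odd_parts_upto k (M - 2 * k - 1)" for ys
      using that by (auto simp: odd_parts_upto_def)
    moreover from k have "M - 2 * k - 1 + k = M - k - 1" by simp
    ultimately show "(\<Sum>ys\<in>odd_parts_upto k (M - 2 * k - 1). Suc (length ys)) =
        (M - 2 * k) * ((M - k - 1) choose k)"
      by (simp add: card_odd_parts_upto)
  qed
  finally show ?thesis .
qed

end
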